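(* Let $T$ be a binary tree, i.e. a finite tree in which every vertex has degree $1$ or $3$ except possibly one vertex (the root) of degree $2$, and let $n_1$ be the number of vertices of degree $1$ in $T$. Then $tvs(T)=\left\lceil \tfrac{n_1+1}{2}\right\rceil$.
   Context: Graphs are finite, simple and undirected. For a graph $G$, a total weighting is a map $w: V(G)\cup E(G)\to \{1,2,\dots\}$; the weighted degree of a vertex $v$ is $wt_G(v)=w(v)+\sum_{e\in E(G),\, v\in e} w(e)$. The weighting is irregular if $wt_G(u)\neq wt_G(v)$ for all distinct $u,v\in V(G)$. The total vertex irregularity strength $tvs(G)$ is the smallest integer $s$ such that there is an irregular total weighting of $G$ with values in $\{1,2,\dots,s\}$. *)

theory Defs
  imports Complex_Main
begin

definition simple_graph :: "'a set \<Rightarrow> 'a set set \<Rightarrow> bool" where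
  "simple_graph V E \<longleftrightarrow> finite V \<and>
     (\<forall>e\<in>E. \<exists>u v. u \<in> V \<and> v \<in> V \<and> u \<noteq> v \<and> e = {u, v})"

definition degree :: "'a set set \<Rightarrow> 'a \<Rightarrow> nat" where
  "degree E v = card {e \<in> E. v \<in> e}"

definition is_walk :: "'a set \<Rightarrow> 'a set set \<Rightarrow> 'a list \<Rightarrow> bool" where
  "is_walk V E xs \<longleftrightarrow> xs \<noteq> [] \<and> set xs \<subseteq> V \<and>
     (\<forall>i. Suc i < length xs \<longrightarrow> {xs ! i, xs ! Suc i} \<in> E)"

definition connected_graph :: "'a set \<Rightarrow> 'a set set \<Rightarrow> bool" where
  "connected_graph V E \<longleftrightarrow> V \<noteq> {} \<and>
     (\<forall>u\<in>V. \<forall>v\<in>V. \<exists>xs. is_walk V E xs \<and> hd xs = u \<and> last xs = v)"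

definition is_cycle :: "'a set \<Rightarrow> 'a set set \<Rightarrow> 'a list \<Rightarrow> bool" where
  "is_cycle V E xs \<longleftrightarrow> length xs \<ge> 3 \<and> distinct xs \<and> is_walk V E xs \<and>
     {last xs, hd xs} \<in> E"

definition acyclic_graph :: "'a set \<Rightarrow> 'a set set \<Rightarrow> bool" where
  "acyclic_graph V E \<longleftrightarrow> (\<nexists>xs. is_cycle V E xs)"

definition is_tree :: "'a set \<Rightarrow> 'a set set \<Rightarrow> bool" where
  "is_tree V E \<longleftrightarrow> simple_graph V E \<and> connected_graph V E \<and> acyclic_graph V E"

definition binary_tree :: "'a set \<Rightarrow> 'a set set \<Rightarrow> bool" where
  "binary_tree V E \<longleftrightarrow> is_tree V E \<and>
     (\<forall>v\<in>V. degree E v = 1 \<or> degree E v = 2 \<or> degree E v = 3) \<and>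
     card {v \<in> V. degree E v = 2} \<le> 1"

definition weighted_degree :: "'a set set \<Rightarrow> ('a \<Rightarrow> nat) \<Rightarrow> ('a set \<Rightarrow> nat) \<Rightarrow> 'a \<Rightarrow> nat" where
  "weighted_degree E wv we v = wv v + (\<Sum>e\<in>{e \<in> E. v \<in> e}. we e)"

definition irregular_total_weighting ::
  "'a set \<Rightarrow> 'a set set \<Rightarrow> nat \<Rightarrow> ('a \<Rightarrow> nat) \<Rightarrow> ('a set \<Rightarrow> nat) \<Rightarrow> bool" where
  "irregular_total_weighting V E s wv we \<longleftrightarrow>
     (\<forall>v\<in>V. wv v \<in> {1..s}) \<and> (\<forall>e\<in>E. we e \<in> {1..s}) \<and>
     (\<forall>u\<in>V. \<forall>v\<in>V. u \<noteq> v \<longrightarrow> weighted_degree E wv we u \<noteq> weighted_degree E wv we v)"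

definition tvs :: "'a set \<Rightarrow> 'a set set \<Rightarrow> nat" where
  "tvs V E = (LEAST s. \<exists>wv we. irregular_total_weighting V E s wv we)"

end

theory Submission
  imports Defs
begin

text \<open>
  Let n1 be the number of leaves and s = (n1 + 2) div 2, the claimed value.

  Lower bound: a leaf has weighted degree (its weight) + (the weight of its edge), a number in
  2..2s, and these numbers are pairwise distinct, so n1 \<le> 2s - 1.

  Upper bound: a star (at most three leaves) is weighted directly with weights 1 and 2.
  Otherwise every leaf hangs on an inner vertex. The pendant edges are numbered 0, ..., n1 - 1,
  the two pendant edges at a vertex with two leaf neighbours consecutively; the i-th one gets
  weight s - i div 2 and all other edges get weight s, so the leaf at the i-th pendant edge can
  be given weighted degree 2s - i. All inner vertices are given prescribed weighted degrees above
  2s, in disjoint bands (the root of degree 2, then the degree-3 vertices with one, two and no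
  leaf neighbours), and their vertex weights make up the difference. The bands fit because of
  the counting in a binary tree: if mj vertices of degree 3 have j leaf neighbours, then
  |E| = |V| - 1 gives m0 < m2, and n1 = m1 + 2 m2 + (0 or 1).
\<close>

lemma nat_ceiling_half: "nat \<lceil>(real n + 1) / 2\<rceil> = (n + 2) div 2"
proof -
  have "\<lceil>(real n + 1) / 2\<rceil> = int ((n + 2) div 2)"
    by (rule ceiling_unique; cases "even n") (auto elim!: evenE oddE simp: field_simps)
  then show ?thesis by simp
qed

lemma inj_on_Un_separated:
  fixes f :: "'a \<Rightarrow> 'b::linorder"
  assumes "inj_on f A" "inj_on f B" "\<And>a. a \<in> A \<Longrightarrow> f a < t" "\<And>b. b \<in> B \<Longrightarrow> t \<le> f b"
  shows "inj_on f (A \<union> B)"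
  using assms by (auto simp: inj_on_Un) (metis leD)

lemma inj_on_diff_left_nat:
  fixes g :: "'a \<Rightarrow> nat"
  assumes "inj_on g A" "\<And>x. x \<in> A \<Longrightarrow> g x \<le> c"
  shows "inj_on (\<lambda>x. c - g x) A"
  using assms by (auto simp: inj_on_def) (metis diff_diff_cancel)

lemma nat_half_bounds: "2 * (x div 2) \<le> (x::nat)" "x \<le> 2 * (x div 2) + 1"
  by presburger+

subsection \<open>Simple graphs, trees and walks\<close>

lemma simple_graph_edgeE:
  assumes "simple_graph V E" "e \<in> E"
  obtains u v where "u \<in> V" "v \<in> V" "u \<noteq> v" "e = {u, v}"
  using assms unfolding simple_graph_def by blast

lemma simple_graph_edge_subset: "simple_graph V E \<Longrightarrow> e \<in> E \<Longrightarrow> e \<subseteq> V"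
  by (auto elim: simple_graph_edgeE)

lemma simple_graph_finite_edges: "simple_graph V E \<Longrightarrow> finite E"
  by (meson PowI finite_Pow_iff finite_subset simple_graph_def simple_graph_edge_subset subsetI)

lemma degree_eq_1E:
  assumes "degree E v = 1"
  obtains e where "{e \<in> E. v \<in> e} = {e}"
  using assms unfolding degree_def by (metis card_1_singletonE)

lemma sum_degree_eq_twice_card_edges:
  assumes "simple_graph V E"
  shows "(\<Sum>v\<in>V. degree E v) = 2 * card E"
proof -
  have "finite V" "finite E" using assms simple_graph_finite_edges simple_graph_def by auto
  have "(\<Sum>v\<in>V. degree E v) = (\<Sum>v\<in>V. \<Sum>e\<in>E. if v \<in> e then 1 else 0)"
    unfolding degree_def using \<open>finite E\<close> by (simp add: sum.If_cases Int_def)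
  also have "\<dots> = (\<Sum>e\<in>E. \<Sum>v\<in>V. if v \<in> e then 1 else 0)"
    by (rule sum.swap)
  also have "\<dots> = (\<Sum>e\<in>E. card e)"
  proof (rule sum.cong)
    fix e assume "e \<in> E"
    then have "V \<inter> e = e" using assms simple_graph_edge_subset by blast
    then show "(\<Sum>v\<in>V. if v \<in> e then 1 else 0) = card e"
      using \<open>finite V\<close> by (simp add: sum.If_cases)
  qed simp
  also have "\<dots> = (\<Sum>e\<in>E. 2)"
    using assms by (intro sum.cong) (auto elim: simple_graph_edgeE)
  finally show ?thesis by simp
qed

lemma is_walk_mono: "is_walk V' E' xs \<Longrightarrow> V' \<subseteq> V \<Longrightarrow> E' \<subseteq> E \<Longrightarrow> is_walk V E xs"
  unfolding is_walk_def by blast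

lemma is_walk_take: "is_walk V E xs \<Longrightarrow> 0 < k \<Longrightarrow> is_walk V E (take k xs)"
  unfolding is_walk_def by (auto dest: in_set_takeD)

lemma is_walk_Cons:
  assumes "is_walk V E xs" "z \<in> V" "{z, hd xs} \<in> E"
  shows "is_walk V E (z # xs)"
  using assms unfolding is_walk_def
  by (auto simp: hd_conv_nth nth_Cons less_Suc_eq_0_disj split: nat.split)

lemma finite_distinct_walks:
  assumes "finite V"
  shows "finite {xs. distinct xs \<and> is_walk V E xs}"
proof (rule finite_subset)
  show "{xs. distinct xs \<and> is_walk V E xs} \<subseteq> {xs. set xs \<subseteq> V \<and> length xs \<le> card V}"
    using assms by (auto simp: is_walk_def distinct_card[symmetric] intro: card_mono)
  show "finite {xs. set xs \<subseteq> V \<and> length xs \<le> card V}"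
    using assms by (rule finite_lists_length_le)
qed

lemma acyclic_walk_back_edge:
  assumes "acyclic_graph V E" "is_walk V E xs" "distinct xs"
    and "{hd xs, xs ! i} \<in> E" "1 < i" "i < length xs"
  shows False
proof -
  let ?c = "take (Suc i) xs"
  have "last ?c = xs ! i" "hd ?c = hd xs"
    using assms(6) by (subst last_conv_nth; auto) (cases xs; auto)
  then have "is_cycle V E ?c"
    using assms(2-6) is_walk_take[of V E xs "Suc i"] by (auto simp: is_cycle_def insert_commute)
  then show False using assms(1) unfolding acyclic_graph_def by blast
qed

text \<open>A longest path in a forest starts at a vertex of degree one.\<close>

lemma acyclic_pendant_vertex:
  assumes sg: "simple_graph V E" and ac: "acyclic_graph V E" and "E \<noteq> {}"
  obtains x y where "x \<noteq> y" "{e \<in> E. x \<in> e} = {{x, y}}"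
proof -
  define P where "P = {xs. distinct xs \<and> is_walk V E xs}"
  have fin: "finite (length ` P)"
    unfolding P_def using sg by (intro finite_imageI finite_distinct_walks) (simp add: simple_graph_def)
  obtain u v where uv: "u \<in> V" "v \<in> V" "u \<noteq> v" "{u, v} \<in> E"
    using \<open>E \<noteq> {}\<close> simple_graph_edgeE[OF sg] by blast
  have "[u, v] \<in> P" using uv unfolding P_def is_walk_def by (auto simp: less_Suc_eq)
  then have "Max (length ` P) \<in> length ` P" using Max_in[OF fin] by blast
  then obtain xs where xs: "xs \<in> P" "length xs = Max (length ` P)" by (metis imageE)
  have long: "length ys \<le> length xs" if "ys \<in> P" for ys
    unfolding xs(2) by (rule Max_ge[OF fin imageI[OF that]])
  from long[OF \<open>[u, v] \<in> P\<close>] have len: "1 < length xs" by simp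
  have walk: "is_walk V E xs" and dist: "distinct xs" using xs(1) unfolding P_def by auto
  define x y where "x = hd xs" and "y = xs ! 1"
  have "{x, y} \<in> E" using walk len unfolding is_walk_def x_def y_def by (auto simp: hd_conv_nth)
  moreover have "x \<noteq> y"
    using nth_eq_iff_index_eq[OF dist, of 0 1] len unfolding x_def y_def by (cases xs) auto
  moreover have "e = {x, y}" if "e \<in> E" "x \<in> e" for e
  proof -
    obtain z where z: "e = {x, z}" "z \<in> V" "z \<noteq> x"
      using sg \<open>e \<in> E\<close> \<open>x \<in> e\<close> by (elim simple_graph_edgeE) (auto simp: insert_commute)
    show ?thesis
    proof (cases "z \<in> set xs")
      case False
      then have "z # xs \<in> P"
        using is_walk_Cons[OF walk z(2)] z(1) \<open>e \<in> E\<close> dist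
        unfolding P_def x_def by (simp add: insert_commute)
      then show ?thesis using long by fastforce
    next
      case True
      then obtain i where i: "i < length xs" "z = xs ! i" by (auto simp: in_set_conv_nth)
      have "i \<noteq> 0" using i z(3) len unfolding x_def by (cases xs; cases i) auto
      moreover have "\<not> 1 < i"
        using acyclic_walk_back_edge[OF ac walk dist, of i] i z(1) \<open>e \<in> E\<close>
        unfolding x_def by blast
      ultimately show ?thesis using i z(1) unfolding y_def by (simp add: not_less_iff_gr_or_eq)
    qed
  qed
  ultimately show ?thesis using that by blast
qed

lemma acyclic_card_edges:
  assumes "simple_graph V E" "acyclic_graph V E" "V \<noteq> {}"
  shows "card E + 1 \<le> card V"
  using assms
proof (induction "card V" arbitrary: V E rule: less_induct)
  case less
  note sg = less.prems(1)
  have fin: "finite V" "finite E" using sg simple_graph_finite_edges simple_graph_def by auto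
  show ?case
  proof (cases "E = {}")
    case True
    then show ?thesis using less.prems fin by (simp add: Suc_leI card_gt_0_iff)
  next
    case False
    obtain x y where xy: "x \<noteq> y" "{e \<in> E. x \<in> e} = {{x, y}}"
      using acyclic_pendant_vertex[OF sg less.prems(2) False] by blast
    have xyE: "{x, y} \<in> E" using xy by blast
    then have V: "x \<in> V" "y \<in> V" using simple_graph_edge_subset[OF sg] by auto
    define V' E' where "V' = V - {x}" and "E' = E - {{x, y}}"
    have E': "E' = {e \<in> E. x \<notin> e}" unfolding E'_def using xy by auto
    have "simple_graph V' E'"
      using sg unfolding simple_graph_def V'_def E' by blast
    moreover have "acyclic_graph V' E'"
      using less.prems(2) is_walk_mono[of V' E' _ V E]
      unfolding acyclic_graph_def is_cycle_def V'_def E'_def by blast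
    moreover have "card V' < card V"
      using V fin unfolding V'_def by (intro card_Diff1_less)
    moreover have "V' \<noteq> {}" using V xy unfolding V'_def by blast
    ultimately have "card E' + 1 \<le> card V'" using less.hyps by blast
    then show ?thesis
      using V xyE fin unfolding V'_def E'_def by (simp add: card_gt_0_iff)
  qed
qed

lemma connected_graph_closed_subset:
  assumes conn: "connected_graph V E" and X: "X \<subseteq> V" "u \<in> X"
    and closed: "\<And>a b. {a, b} \<in> E \<Longrightarrow> a \<in> X \<Longrightarrow> b \<in> X"
  shows "X = V"
proof (rule subset_antisym[OF X(1)], rule subsetI)
  fix w assume "w \<in> V"
  then obtain xs where xs: "is_walk V E xs" "hd xs = u" "last xs = w"
    using conn X unfolding connected_graph_def by blast
  have "xs ! i \<in> X" if "i < length xs" for i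
    using that
  proof (induction i)
    case 0
    then show ?case using xs X by (simp add: hd_conv_nth[symmetric])
  next
    case (Suc i)
    then have "{xs ! i, xs ! Suc i} \<in> E" using xs(1) unfolding is_walk_def by simp
    then show ?case using Suc closed by simp
  qed
  moreover have "xs \<noteq> []" using xs(1) unfolding is_walk_def by simp
  ultimately show "w \<in> X" using xs(3) by (metis last_conv_nth diff_less length_greater_0_conv zero_less_one)
qed

subsection \<open>The lower bound\<close>

lemma irregular_total_weighting_card_leaves:
  assumes "simple_graph V E" "V \<noteq> {}" "irregular_total_weighting V E s wv we"
  shows "card {v \<in> V. degree E v = 1} + 1 \<le> 2 * s"
proof -
  let ?L = "{v \<in> V. degree E v = 1}"
  let ?f = "weighted_degree E wv we"
  obtain v where "v \<in> V" using assms(2) by blast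
  then have "wv v \<in> {1..s}" using assms(3) unfolding irregular_total_weighting_def by blast
  then have "1 \<le> s" by simp
  have "inj_on ?f ?L" using assms(3) unfolding irregular_total_weighting_def inj_on_def by blast
  moreover have "?f ` ?L \<subseteq> {2..2 * s}"
  proof
    fix y assume "y \<in> ?f ` ?L"
    then obtain v where v: "v \<in> V" "degree E v = 1" "y = ?f v" by blast
    obtain e where e: "{e \<in> E. v \<in> e} = {e}" using degree_eq_1E[OF v(2)] .
    then have "e \<in> E" by blast
    then have "wv v \<in> {1..s}" "we e \<in> {1..s}"
      using assms(3) v(1) unfolding irregular_total_weighting_def by blast+
    moreover have "y = wv v + we e" using v(3) e unfolding weighted_degree_def by simp
    ultimately show "y \<in> {2..2 * s}" by simp
  qed
  ultimately have "card ?L \<le> card {2..2 * s}"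
    using card_inj_on_le by blast
  then show ?thesis using \<open>1 \<le> s\<close> by simp
qed

subsection \<open>Stars\<close>

lemma star_incident:
  assumes "c \<notin> N" "u \<in> N"
  shows "{e \<in> (\<lambda>u. {c, u}) ` N. u \<in> e} = {{c, u}}"
  using assms by (auto simp: doubleton_eq_iff)

lemma star_degree_centre:
  assumes "c \<notin> N"
  shows "degree ((\<lambda>u. {c, u}) ` N) c = card N"
proof -
  have "{e \<in> (\<lambda>u. {c, u}) ` N. c \<in> e} = (\<lambda>u. {c, u}) ` N" by auto
  moreover have "inj_on (\<lambda>u. {c, u}) N" using assms by (auto simp: inj_on_def doubleton_eq_iff)
  ultimately show ?thesis unfolding degree_def by (simp add: card_image)
qed

lemma star_degree_leaf: "c \<notin> N \<Longrightarrow> u \<in> N \<Longrightarrow> degree ((\<lambda>u. {c, u}) ` N) u = 1"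
  unfolding degree_def by (simp add: star_incident)

lemma star_irregular_total_weighting:
  assumes "finite N" "c \<notin> N" "card N \<le> 3"
  shows "\<exists>wv we. irregular_total_weighting (insert c N) ((\<lambda>u. {c, u}) ` N) 2 wv we"
proof -
  let ?E = "(\<lambda>u. {c, u}) ` N"
  define d where "d = card N"
  obtain ix where ix: "bij_betw ix N {0..<d}"
    using ex_bij_betw_finite_nat[OF assms(1)] unfolding d_def by blast
  then have ix_less: "ix u < d" if "u \<in> N" for u using that by (auto dest: bij_betw_apply)
  have inj: "inj_on (\<lambda>u. {c, u}) N" using assms(2) by (auto simp: inj_on_def doubleton_eq_iff)
  define we where "we e = 2 - ix (the_elem (e - {c})) div 2" for e :: "'a set"
  define wv where "wv u = (if u = c then 1 else 2 - (ix u + 1) div 2)" for u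
  have we: "we {c, u} = 2 - ix u div 2" if "u \<in> N" for u
  proof -
    have "{c, u} - {c} = {u}" using that assms(2) by auto
    then show ?thesis unfolding we_def by simp
  qed
  have wd_leaf: "weighted_degree ?E wv we u = 4 - ix u" if "u \<in> N" for u
  proof -
    have "u \<noteq> c" "ix u < 3" using that assms(2,3) ix_less[OF that] unfolding d_def by auto
    then show ?thesis
      using star_incident[OF assms(2) that] we[OF that] unfolding weighted_degree_def wv_def by auto
  qed
  have "{e \<in> ?E. c \<in> e} = ?E" by auto
  moreover have "(\<Sum>e\<in>?E. we e) = (\<Sum>i<d. 2 - i div 2)"
    unfolding sum.reindex[OF inj] using we sum.reindex_bij_betw[OF ix, of "\<lambda>i. 2 - i div 2"]
    by (simp add: atLeast0LessThan)
  ultimately have wd_centre: "weighted_degree ?E wv we c = 1 + (\<Sum>i<d. 2 - i div 2)"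
    unfolding weighted_degree_def wv_def by simp
  have centre: "weighted_degree ?E wv we u \<noteq> weighted_degree ?E wv we c" if "u \<in> N" for u
  proof -
    have "d = 1 \<or> d = 2 \<or> d = 3" using ix_less[OF that] assms(3) unfolding d_def by linarith
    then show ?thesis
      using wd_leaf[OF that] wd_centre ix_less[OF that] by (auto simp: numeral_3_eq_3 numeral_2_eq_2)
  qed
  have "irregular_total_weighting (insert c N) ?E 2 wv we"
    unfolding irregular_total_weighting_def
  proof (intro conjI ballI impI)
    show "wv u \<in> {1..2}" if "u \<in> insert c N" for u
      using that ix_less[of u] assms(3) unfolding wv_def d_def by auto
    show "we e \<in> {1..2}" if "e \<in> ?E" for e
    proof -
      obtain u where "u \<in> N" "e = {c, u}" using \<open>e \<in> ?E\<close> by blast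
      then show ?thesis using we ix_less[of u] assms(3) unfolding d_def by auto
    qed
    have leaves: "weighted_degree ?E wv we a \<noteq> weighted_degree ?E wv we b"
      if "a \<in> N" "b \<in> N" "a \<noteq> b" for a b
    proof -
      have "ix a \<noteq> ix b" using ix that unfolding bij_betw_def inj_on_def by blast
      then show ?thesis
        using wd_leaf that ix_less[OF \<open>a \<in> N\<close>] ix_less[OF \<open>b \<in> N\<close>] assms(3)
        unfolding d_def by auto
    qed
    show "weighted_degree ?E wv we a \<noteq> weighted_degree ?E wv we b"
      if "a \<in> insert c N" "b \<in> insert c N" "a \<noteq> b" for a b
      using that centre leaves by (metis insertE)
  qed
  then show ?thesis by blast
qed

lemma binary_tree_star:
  assumes bt: "binary_tree V E" and "c \<in> V" and star: "\<And>u. {c, u} \<in> E \<Longrightarrow> degree E u = 1"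
  obtains N where "V = insert c N" "c \<notin> N" "E = (\<lambda>u. {c, u}) ` N"
proof -
  have sg: "simple_graph V E" and conn: "connected_graph V E"
    using bt unfolding binary_tree_def is_tree_def by auto
  define N where "N = {u. {c, u} \<in> E}"
  have nbr: "u \<in> V" "u \<noteq> c" "{e \<in> E. u \<in> e} = {{c, u}}" if "u \<in> N" for u
  proof -
    have e: "{c, u} \<in> E" using that unfolding N_def by simp
    then show "u \<in> V" "u \<noteq> c"
      using sg by (auto elim!: simple_graph_edgeE simp: doubleton_eq_iff)
    obtain e0 where e0: "{e \<in> E. u \<in> e} = {e0}" using degree_eq_1E[OF star[OF e]] .
    moreover have "{c, u} \<in> {e \<in> E. u \<in> e}" using e by simp
    ultimately show "{e \<in> E. u \<in> e} = {{c, u}}" by simp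
  qed
  have V: "V = insert c N"
  proof (rule connected_graph_closed_subset[OF conn _ insertI1, symmetric])
    show "insert c N \<subseteq> V" using \<open>c \<in> V\<close> nbr(1) by blast
    fix a b assume ab: "{a, b} \<in> E" "a \<in> insert c N"
    show "b \<in> insert c N"
    proof (cases "a = c")
      case True
      then show ?thesis using ab(1) unfolding N_def by simp
    next
      case False
      then have "a \<in> N" using ab(2) by simp
      have "{a, b} \<in> {e \<in> E. a \<in> e}" using ab(1) by simp
      then have "{a, b} \<in> {{c, a}}" unfolding nbr(3)[OF \<open>a \<in> N\<close>] .
      then have "b = a \<or> b = c" by (auto simp: doubleton_eq_iff)
      then show ?thesis using \<open>a \<in> N\<close> by blast
    qed
  qed
  have "E = (\<lambda>u. {c, u}) ` N"
  proof (intro subset_antisym subsetI)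
    fix e assume "e \<in> E"
    then obtain a b where ab: "a \<in> V" "b \<in> V" "e = {a, b}" using sg by (auto elim: simple_graph_edgeE)
    show "e \<in> (\<lambda>u. {c, u}) ` N"
    proof (cases "a = c")
      case True
      then have "b \<in> N" using \<open>e \<in> E\<close> ab(3) unfolding N_def by simp
      then show ?thesis using ab(3) True by blast
    next
      case False
      then have "a \<in> N" using ab(1) V by blast
      moreover have "e \<in> {e \<in> E. a \<in> e}" using \<open>e \<in> E\<close> ab(3) by simp
      ultimately have "e = {c, a}" using nbr(3) by blast
      then show ?thesis using \<open>a \<in> N\<close> by blast
    qed
  qed (auto simp: N_def)
  moreover have "c \<notin> N" using nbr(2) by blast
  ultimately show thesis using that V by blast
qed

lemma binary_tree_star_weighting:
  assumes bt: "binary_tree V E" and "c \<in> V" and "\<And>u. {c, u} \<in> E \<Longrightarrow> degree E u = 1"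
  shows "\<exists>wv we. irregular_total_weighting V E ((card {v \<in> V. degree E v = 1} + 2) div 2) wv we"
proof -
  obtain N where N: "V = insert c N" "c \<notin> N" "E = (\<lambda>u. {c, u}) ` N"
    by (rule binary_tree_star[OF assms])
  have "finite N" using bt N(1) unfolding binary_tree_def is_tree_def simple_graph_def by simp
  have "degree E c \<in> {1, 2, 3}" using bt \<open>c \<in> V\<close> unfolding binary_tree_def by auto
  then have d: "card N \<in> {1, 2, 3}" using star_degree_centre[OF N(2)] N(3) by simp
  have "{v \<in> V. degree E v = 1} = (if card N = 1 then insert c N else N)"
    using star_degree_centre[OF N(2)] star_degree_leaf[OF N(2)] N by auto
  then have s: "(card {v \<in> V. degree E v = 1} + 2) div 2 = 2"
    using d \<open>finite N\<close> N(2) by (auto simp: card_insert_if)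
  have "card N \<le> 3" using d by auto
  then show ?thesis
    unfolding s using star_irregular_total_weighting[OF \<open>finite N\<close> N(2)] by (simp only: N(1,3))
qed

subsection \<open>Binary trees that are not stars\<close>

locale binary_tree_without_star =
  fixes V :: "'a set" and E :: "'a set set"
  assumes binary_tree: "binary_tree V E"
    and nonleaf_neighbour: "\<And>v. v \<in> V \<Longrightarrow> \<exists>u. {v, u} \<in> E \<and> degree E u \<noteq> 1"
begin

lemma simple: "simple_graph V E" and connected: "connected_graph V E"
  and acyclic: "acyclic_graph V E"
  and degree_cases: "v \<in> V \<Longrightarrow> degree E v = 1 \<or> degree E v = 2 \<or> degree E v = 3"
  and card_degree_2: "card {v \<in> V. degree E v = 2} \<le> 1"
  using binary_tree unfolding binary_tree_def is_tree_def by auto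

lemma finite_V: "finite V" and finite_E: "finite E" and V_nonempty: "V \<noteq> {}"
  using simple simple_graph_finite_edges connected
  unfolding simple_graph_def connected_graph_def by auto

definition leaves :: "'a set" where "leaves = {v \<in> V. degree E v = 1}"
definition inner :: "'a set" where "inner = V - leaves"
definition incident :: "'a \<Rightarrow> 'a set set" where "incident v = {e \<in> E. v \<in> e}"
definition leaf_edge :: "'a \<Rightarrow> 'a set" where "leaf_edge l = the_elem (incident l)"
definition pendant_edges :: "'a set set" where "pendant_edges = leaf_edge ` leaves"
definition parent :: "'a set \<Rightarrow> 'a" where "parent e = the_elem (e - leaves)"
definition pendant :: "'a \<Rightarrow> 'a set set" where "pendant v = {e \<in> pendant_edges. parent e = v}"
definition leaf_degree :: "'a \<Rightarrow> nat" where "leaf_degree v = card (pendant v)"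

lemma finite_incident: "finite (incident v)"
  unfolding incident_def using finite_E by simp

lemma degree_eq_card_incident: "degree E v = card (incident v)"
  unfolding degree_def incident_def ..

lemma finite_leaves: "finite leaves" and finite_inner: "finite inner"
  unfolding leaves_def inner_def using finite_V by auto

lemma leaf_edge:
  assumes "l \<in> leaves"
  obtains p where "p \<in> inner" "leaf_edge l = {l, p}" "incident l = {{l, p}}"
proof -
  have "l \<in> V" "degree E l = 1" using assms unfolding leaves_def by auto
  obtain e where e: "incident l = {e}"
    using degree_eq_1E[OF \<open>degree E l = 1\<close>] unfolding incident_def by blast
  obtain p where p: "{l, p} \<in> E" "degree E p \<noteq> 1" using nonleaf_neighbour[OF \<open>l \<in> V\<close>] by blast
  then have "p \<in> V" "p \<noteq> l"
    using simple by (auto elim!: simple_graph_edgeE simp: doubleton_eq_iff)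
  then have "p \<in> inner" using p(2) unfolding inner_def leaves_def by simp
  moreover have "{l, p} \<in> incident l" using p(1) unfolding incident_def by simp
  ultimately show thesis using that e unfolding leaf_edge_def by simp
qed

lemma parent_leaf_edge:
  assumes "l \<in> leaves" "leaf_edge l = {l, p}" "p \<in> inner"
  shows "parent (leaf_edge l) = p"
proof -
  have "{l, p} - leaves = {p}" using assms(1,3) unfolding inner_def by auto
  then show ?thesis unfolding parent_def assms(2) by simp
qed

lemma pendant_edgeE:
  assumes "e \<in> pendant_edges"
  obtains l where "l \<in> leaves" "e = leaf_edge l" "e = {l, parent e}" "parent e \<in> inner"
    "incident l = {e}"
proof -
  obtain l where l: "l \<in> leaves" "e = leaf_edge l" using assms unfolding pendant_edges_def by blast
  obtain p where p: "p \<in> inner" "leaf_edge l = {l, p}" "incident l = {{l, p}}"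
    using leaf_edge[OF l(1)] .
  have "parent e = p" using parent_leaf_edge[OF l(1) p(2,1)] l(2) by simp
  then show thesis using that l p by simp
qed

lemma pendant_edges_subset: "pendant_edges \<subseteq> E"
  by (auto elim!: pendant_edgeE simp: incident_def)

lemma inj_on_leaf_edge: "inj_on leaf_edge leaves"
proof (rule inj_onI)
  fix l l' assume "l \<in> leaves" "l' \<in> leaves" "leaf_edge l = leaf_edge l'"
  moreover obtain p where "p \<in> inner" "leaf_edge l = {l, p}" using leaf_edge[OF \<open>l \<in> leaves\<close>] .
  moreover obtain p' where "leaf_edge l' = {l', p'}" using leaf_edge[OF \<open>l' \<in> leaves\<close>] .
  ultimately show "l = l'" unfolding inner_def by (auto simp: doubleton_eq_iff)
qed

lemma card_pendant_edges: "card pendant_edges = card leaves"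
  unfolding pendant_edges_def using inj_on_leaf_edge by (rule card_image)

lemma pendant_subset_incident: "pendant v \<subseteq> incident v"
proof
  fix e assume "e \<in> pendant v"
  then have e: "e \<in> pendant_edges" "parent e = v" unfolding pendant_def by auto
  then obtain l where "e = {l, parent e}" by (metis pendant_edgeE)
  then show "e \<in> incident v" using e pendant_edges_subset unfolding incident_def by auto
qed

lemma incident_pendant_edge:
  assumes "v \<in> inner" "e \<in> incident v" "e \<in> pendant_edges"
  shows "e \<in> pendant v"
proof -
  obtain l where "l \<in> leaves" "e = {l, parent e}" using assms(3) by (metis pendant_edgeE)
  moreover have "v \<in> e" "v \<notin> leaves" using assms(1,2) unfolding incident_def inner_def by auto
  ultimately show ?thesis using assms(3) unfolding pendant_def by auto
qed

lemma leaf_degree_less_degree: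
  assumes "v \<in> V"
  shows "leaf_degree v < degree E v"
proof -
  obtain u where u: "{v, u} \<in> E" "degree E u \<noteq> 1" using nonleaf_neighbour[OF assms] by blast
  have "{v, u} \<notin> pendant v"
  proof
    assume "{v, u} \<in> pendant v"
    then obtain l where "l \<in> leaves" "{v, u} = {l, v}"
      unfolding pendant_def by (auto elim!: pendant_edgeE)
    then show False using assms u(2) unfolding leaves_def by (auto simp: doubleton_eq_iff)
  qed
  moreover have "{v, u} \<in> incident v" using u(1) unfolding incident_def by simp
  ultimately have "pendant v \<subset> incident v" using pendant_subset_incident by blast
  then show ?thesis
    unfolding leaf_degree_def degree_eq_card_incident by (rule psubset_card_mono[OF finite_incident])
qed

definition C :: "nat \<Rightarrow> 'a set" where
  "C j = {v \<in> inner. degree E v = 3 \<and> leaf_degree v = j}"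
definition R :: "'a set" where "R = {v \<in> V. degree E v = 2}"
definition m :: "nat \<Rightarrow> nat" where "m j = card (C j)"
definition s :: nat where "s = (card leaves + 2) div 2"

lemma R_subset_inner: "R \<subseteq> inner"
  unfolding R_def inner_def leaves_def by auto

lemma R_subsingleton: "a \<in> R \<Longrightarrow> b \<in> R \<Longrightarrow> a = b"
  using card_degree_2 finite_V card_le_Suc0_iff_eq[of R] unfolding R_def by auto

lemma leaf_degree_R: "v \<in> R \<Longrightarrow> leaf_degree v \<le> 1"
  using leaf_degree_less_degree unfolding R_def by fastforce

lemma inner_eq: "inner = C 0 \<union> C 1 \<union> C 2 \<union> R"
proof -
  have "v \<in> C 0 \<union> C 1 \<union> C 2 \<union> R" if "v \<in> inner" for v
  proof -
    have "v \<in> V" "degree E v \<noteq> 1" using that unfolding inner_def leaves_def by auto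
    then show ?thesis
      using that degree_cases leaf_degree_less_degree unfolding C_def R_def by fastforce
  qed
  then show ?thesis using R_subset_inner unfolding C_def by blast
qed

lemma finite_C: "finite (C j)" and finite_R: "finite R"
  using finite_inner inner_eq unfolding C_def by (auto intro: finite_subset)

lemma sum_inner:
  "(\<Sum>v\<in>inner. f v) = (\<Sum>v\<in>C 0. f v) + (\<Sum>v\<in>C 1. f v) + (\<Sum>v\<in>C 2. f v) + (\<Sum>v\<in>R. f v)"
proof -
  have "(C 0 \<union> C 1 \<union> C 2) \<inter> R = {}" "(C 0 \<union> C 1) \<inter> C 2 = {}" "C 0 \<inter> C 1 = {}"
    unfolding C_def R_def by auto
  then show ?thesis
    unfolding inner_eq using finite_C finite_R by (simp add: sum.union_disjoint)
qed

lemma finite_pendant_edges: "finite pendant_edges"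
  unfolding pendant_edges_def using finite_leaves by simp

lemma card_leaves_eq: "card leaves = m 1 + 2 * m 2 + (\<Sum>v\<in>R. leaf_degree v)"
proof -
  have "parent ` pendant_edges \<subseteq> inner" by (auto elim: pendant_edgeE)
  have "card pendant_edges = (\<Sum>v\<in>inner. leaf_degree v)"
    using sum.group[OF finite_pendant_edges finite_inner \<open>parent ` pendant_edges \<subseteq> inner\<close>, of "\<lambda>_. 1::nat"]
    unfolding leaf_degree_def pendant_def by simp
  then show ?thesis unfolding card_pendant_edges sum_inner m_def by (simp add: C_def)
qed

lemma card_C_add_2_le_card_leaves: "m 0 + m 1 + m 2 + 2 \<le> card leaves"
proof -
  have "leaves \<subseteq> V" unfolding leaves_def by auto
  then have "card V = card inner + card leaves"
    and "(\<Sum>v\<in>V. degree E v) = (\<Sum>v\<in>inner. degree E v) + (\<Sum>v\<in>leaves. degree E v)"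
    using sum.subset_diff[OF _ finite_V, of leaves "\<lambda>_. 1::nat"] sum.subset_diff[OF _ finite_V]
    unfolding inner_def by auto
  moreover have "(\<Sum>v\<in>leaves. degree E v) = card leaves"
    unfolding leaves_def by simp
  moreover have "card E + 1 \<le> card V" using acyclic_card_edges[OF simple acyclic V_nonempty] .
  ultimately show ?thesis
    using sum_degree_eq_twice_card_edges[OF simple] sum_inner[of "\<lambda>_. 1::nat"] sum_inner[of "degree E"]
    by (simp add: m_def C_def R_def)
qed

lemma sum_leaf_degree_R_le_1: "(\<Sum>v\<in>R. leaf_degree v) \<le> 1"
proof (cases "R = {}")
  case False
  then obtain r where "r \<in> R" by blast
  then have "R = {r}" using R_subsingleton by blast
  then show ?thesis using leaf_degree_R \<open>r \<in> R\<close> by simp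
qed simp

lemma m0_less_m2: "m 0 < m 2"
  using card_C_add_2_le_card_leaves card_leaves_eq sum_leaf_degree_R_le_1 by linarith

definition rank :: "nat \<Rightarrow> 'a \<Rightarrow> nat" where
  "rank j = (SOME h. bij_betw h (C j) {0..<m j})"

lemma rank_less: "v \<in> C j \<Longrightarrow> rank j v < m j"
  and inj_on_rank: "inj_on (rank j) (C j)"
proof -
  have "bij_betw (rank j) (C j) {0..<m j}"
    unfolding rank_def m_def using ex_bij_betw_finite_nat[OF finite_C] by (rule someI_ex)
  then show "v \<in> C j \<Longrightarrow> rank j v < m j" "inj_on (rank j) (C j)"
    unfolding bij_betw_def by auto
qed

lemma C_disjoint: "i \<noteq> j \<Longrightarrow> v \<in> C i \<Longrightarrow> v \<notin> C j"
  and C_R_disjoint: "v \<in> R \<Longrightarrow> v \<notin> C j"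
  and inner_not_leaf: "v \<in> inner \<Longrightarrow> v \<notin> leaves"
  unfolding C_def R_def inner_def by auto

lemma finite_pendant: "finite (pendant v)"
  using finite_subset[OF pendant_subset_incident finite_incident] .

lemma pendant_subsingleton: "leaf_degree v \<le> 1 \<Longrightarrow> e \<in> pendant v \<Longrightarrow> e' \<in> pendant v \<Longrightarrow> e = e'"
  using card_le_Suc0_iff_eq[OF finite_pendant] unfolding leaf_degree_def by auto

lemma pendant_edge_parent:
  assumes "e \<in> pendant_edges"
  shows "e \<in> pendant (parent e)" "parent e \<in> C 1 \<or> parent e \<in> C 2 \<or> parent e \<in> R"
proof -
  show "e \<in> pendant (parent e)" using assms unfolding pendant_def by simp
  then have "leaf_degree (parent e) \<noteq> 0"
    unfolding leaf_degree_def using finite_pendant by auto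
  then have "parent e \<notin> C 0" unfolding C_def by simp
  moreover have "parent e \<in> inner" using assms by (auto elim: pendant_edgeE)
  ultimately show "parent e \<in> C 1 \<or> parent e \<in> C 2 \<or> parent e \<in> R"
    using inner_eq by blast
qed

definition first_pendant :: "'a \<Rightarrow> 'a set" where "first_pendant v = (SOME e. e \<in> pendant v)"

text \<open>The two pendant edges at a vertex of C 2 get consecutive numbers 2k, 2k + 1, hence the
  same weight s - k.\<close>

definition pendant_index :: "'a set \<Rightarrow> nat" where
  "pendant_index e =
    (if parent e \<in> C 2 then 2 * rank 2 (parent e) + (if e = first_pendant (parent e) then 0 else 1)
     else if parent e \<in> C 1 then 2 * m 2 + rank 1 (parent e)
     else 2 * m 2 + m 1)"

lemma pendant_index_C2:
  assumes "e \<in> pendant v" "v \<in> C 2"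
  shows "pendant_index e div 2 = rank 2 v" "pendant_index e < 2 * m 2"
proof -
  have "parent e = v" using assms(1) unfolding pendant_def by simp
  then show "pendant_index e div 2 = rank 2 v" "pendant_index e < 2 * m 2"
    using assms(2) rank_less[OF assms(2)] unfolding pendant_index_def by auto
qed

lemma pendant_index_C1:
  assumes "e \<in> pendant v" "v \<in> C 1"
  shows "pendant_index e = 2 * m 2 + rank 1 v"
proof -
  have "parent e = v" using assms(1) unfolding pendant_def by simp
  then show ?thesis using assms(2) C_disjoint[of 1 2] unfolding pendant_index_def by auto
qed

lemma pendant_index_R:
  assumes "e \<in> pendant v" "v \<in> R"
  shows "pendant_index e = 2 * m 2 + m 1" "(\<Sum>v\<in>R. leaf_degree v) = 1"
proof -
  have "parent e = v" using assms(1) unfolding pendant_def by simp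
  then show "pendant_index e = 2 * m 2 + m 1"
    using C_R_disjoint[OF assms(2)] unfolding pendant_index_def by auto
  have "R = {v}" using assms(2) R_subsingleton by blast
  moreover have "leaf_degree v \<noteq> 0" using assms(1) finite_pendant unfolding leaf_degree_def by auto
  ultimately show "(\<Sum>v\<in>R. leaf_degree v) = 1" using leaf_degree_R[OF assms(2)] by simp
qed

lemma pendant_index_less: "e \<in> pendant_edges \<Longrightarrow> pendant_index e < card leaves"
  using pendant_edge_parent[of e] pendant_index_C2 pendant_index_C1 pendant_index_R
    rank_less card_leaves_eq by fastforce

lemma inj_on_pendant_index: "inj_on pendant_index pendant_edges"
proof -
  let ?P = "\<lambda>A. {e \<in> pendant_edges. parent e \<in> A}"
  have inj2: "inj_on pendant_index (?P (C 2))"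
  proof (rule inj_onI)
    fix e e' assume e: "e \<in> ?P (C 2)" "e' \<in> ?P (C 2)" "pendant_index e = pendant_index e'"
    then have "rank 2 (parent e) = rank 2 (parent e')"
      using pendant_index_C2(1) pendant_edge_parent(1) by (metis (no_types, lifting) mem_Collect_eq)
    then have p: "parent e = parent e'" using inj_on_rank e(1,2) by (auto dest: inj_onD)
    then have "(e = first_pendant (parent e)) = (e' = first_pendant (parent e))"
      using e unfolding pendant_index_def by (auto split: if_splits)
    moreover have "e = e'" if "e \<noteq> first_pendant (parent e)" "e' \<noteq> first_pendant (parent e)"
    proof -
      have "e \<in> pendant (parent e)" "e' \<in> pendant (parent e)"
        using pendant_edge_parent(1)[of e] pendant_edge_parent(1)[of e'] e(1,2) p by simp_all
      then have "first_pendant (parent e) \<in> pendant (parent e)"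
        unfolding first_pendant_def by (metis someI)
      show "e = e'"
      proof (rule ccontr)
        assume "e \<noteq> e'"
        then have "card {first_pendant (parent e), e, e'} = 3" using that by simp
        moreover have "{first_pendant (parent e), e, e'} \<subseteq> pendant (parent e)"
          using \<open>first_pendant (parent e) \<in> pendant (parent e)\<close>
            \<open>e \<in> pendant (parent e)\<close> \<open>e' \<in> pendant (parent e)\<close> by simp
        ultimately have "3 \<le> leaf_degree (parent e)"
          unfolding leaf_degree_def by (metis card_mono finite_pendant)
        then show False using e(1) unfolding C_def by simp
      qed
    qed
    ultimately show "e = e'" by blast
  qed
  have inj1: "inj_on pendant_index (?P (C 1))"
  proof (rule inj_onI)
    fix e e' assume e: "e \<in> ?P (C 1)" "e' \<in> ?P (C 1)" "pendant_index e = pendant_index e'"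
    then have "e \<in> pendant (parent e)" "e' \<in> pendant (parent e')"
      using pendant_edge_parent(1) by simp_all
    then have "rank 1 (parent e) = rank 1 (parent e')"
      using e pendant_index_C1 by simp
    then have "parent e = parent e'" using inj_on_rank e(1,2) by (auto dest: inj_onD)
    moreover have "leaf_degree (parent e) \<le> 1" using e(1) unfolding C_def by simp
    ultimately show "e = e'"
      using \<open>e \<in> pendant (parent e)\<close> \<open>e' \<in> pendant (parent e')\<close>
      by (metis pendant_subsingleton)
  qed
  have injR: "inj_on pendant_index (?P R)"
  proof (rule inj_onI)
    fix e e' assume e: "e \<in> ?P R" "e' \<in> ?P R"
    then have "e \<in> pendant (parent e)" "e' \<in> pendant (parent e')" "parent e = parent e'"
      using pendant_edge_parent(1) R_subsingleton by simp_all
    moreover have "leaf_degree (parent e) \<le> 1" using e(1) leaf_degree_R by simp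
    ultimately show "e = e'" by (metis pendant_subsingleton)
  qed
  have idx2: "pendant_index e < 2 * m 2" if "e \<in> ?P (C 2)" for e
    using that pendant_edge_parent(1)[of e] pendant_index_C2(2) by simp
  have idx1: "2 * m 2 \<le> pendant_index e \<and> pendant_index e < 2 * m 2 + m 1" if "e \<in> ?P (C 1)" for e
    using that pendant_edge_parent(1)[of e] pendant_index_C1 rank_less by simp
  have idxR: "pendant_index e = 2 * m 2 + m 1" if "e \<in> ?P R" for e
    using that pendant_edge_parent(1)[of e] pendant_index_R(1) by simp
  have "inj_on pendant_index (?P (C 1) \<union> ?P R)"
    by (rule inj_on_Un_separated[OF inj1 injR, where t = "2 * m 2 + m 1"]) (use idx1 idxR in auto)
  then have "inj_on pendant_index (?P (C 2) \<union> (?P (C 1) \<union> ?P R))"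
    by (rule inj_on_Un_separated[OF inj2 _, where t = "2 * m 2"]) (use idx2 idx1 idxR in auto)
  moreover have "?P (C 2) \<union> (?P (C 1) \<union> ?P R) = pendant_edges"
    using pendant_edge_parent(2) by auto
  ultimately show ?thesis
    by simp
qed

definition edge_weight :: "'a set \<Rightarrow> nat" where
  "edge_weight e = (if e \<in> pendant_edges then s - pendant_index e div 2 else s)"

definition target :: "'a \<Rightarrow> nat" where
  "target v =
    (if v \<in> leaves then 2 * s - pendant_index (leaf_edge v)
     else if v \<in> R then 2 * s + 1
     else if v \<in> C 1 then 4 * s + 1 - (2 * m 2 + rank 1 v)
     else if v \<in> C 2 then 4 * s + 1 - (m 2 + rank 2 v)
     else 4 * s + 1 + m 0 - (m 2 + rank 0 v))"

definition vertex_weight :: "'a \<Rightarrow> nat" where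
  "vertex_weight v = target v - (\<Sum>e\<in>incident v. edge_weight e)"

lemma s_bounds: "card leaves < 2 * s" "m 0 < m 2" "m 2 < s" "1 \<le> m 2" "2 * m 2 + m 1 < 2 * s"
  using m0_less_m2 card_leaves_eq unfolding s_def by linarith+

lemma edge_weight_range: "edge_weight e \<in> {1..s}"
proof (cases "e \<in> pendant_edges")
  case True
  then have "pendant_index e < 2 * s" using pendant_index_less s_bounds(1) by fastforce
  then show ?thesis using True nat_half_bounds[of "pendant_index e"] unfolding edge_weight_def by simp
qed (use s_bounds in \<open>simp add: edge_weight_def\<close>)

lemma incident_weight_leaf:
  assumes "l \<in> leaves"
  shows "(\<Sum>e\<in>incident l. edge_weight e) = s - pendant_index (leaf_edge l) div 2"
proof -
  obtain p where "p \<in> inner" "leaf_edge l = {l, p}" "incident l = {{l, p}}"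
    by (rule leaf_edge[OF assms])
  then have "incident l = {leaf_edge l}" by simp
  moreover have "leaf_edge l \<in> pendant_edges" using assms unfolding pendant_edges_def by simp
  ultimately show ?thesis by (simp add: edge_weight_def)
qed

lemma incident_weight_inner:
  assumes "v \<in> inner" and pendant_weight: "\<And>e. e \<in> pendant v \<Longrightarrow> edge_weight e = a"
  shows "(\<Sum>e\<in>incident v. edge_weight e) = leaf_degree v * a + (degree E v - leaf_degree v) * s"
proof -
  have "edge_weight e = s" if "e \<in> incident v - pendant v" for e
    using that incident_pendant_edge[OF assms(1)] unfolding edge_weight_def by auto
  then have "(\<Sum>e\<in>incident v - pendant v. edge_weight e) = (degree E v - leaf_degree v) * s"
    using card_Diff_subset[OF finite_pendant pendant_subset_incident]
    unfolding degree_eq_card_incident leaf_degree_def by simp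
  moreover have "(\<Sum>e\<in>pendant v. edge_weight e) = leaf_degree v * a"
    using pendant_weight unfolding leaf_degree_def by simp
  moreover have "(\<Sum>e\<in>incident v. edge_weight e)
      = (\<Sum>e\<in>incident v - pendant v. edge_weight e) + (\<Sum>e\<in>pendant v. edge_weight e)"
    by (rule sum.subset_diff[OF pendant_subset_incident finite_incident])
  ultimately show ?thesis by simp
qed

lemma target_leaf: "v \<in> leaves \<Longrightarrow> target v = 2 * s - pendant_index (leaf_edge v)"
  and target_R: "v \<in> R \<Longrightarrow> target v = 2 * s + 1"
  and target_C1: "v \<in> C 1 \<Longrightarrow> target v = 4 * s + 1 - (2 * m 2 + rank 1 v)"
  and target_C2: "v \<in> C 2 \<Longrightarrow> target v = 4 * s + 1 - (m 2 + rank 2 v)"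
  and target_C0: "v \<in> C 0 \<Longrightarrow> target v = 4 * s + 1 + m 0 - (m 2 + rank 0 v)"
  using inner_not_leaf R_subset_inner C_R_disjoint C_disjoint[of 0 1] C_disjoint[of 0 2]
    C_disjoint[of 1 2] inner_eq
  unfolding target_def by auto

lemma pendant_empty: "leaf_degree v = 0 \<Longrightarrow> pendant v = {}"
  using finite_pendant unfolding leaf_degree_def by simp

lemma incident_weight_C0: "v \<in> C 0 \<Longrightarrow> (\<Sum>e\<in>incident v. edge_weight e) = 3 * s"
  using incident_weight_inner[of v s] pendant_empty unfolding C_def by auto

lemma incident_weight_C1:
  assumes "v \<in> C 1"
  shows "(\<Sum>e\<in>incident v. edge_weight e) = s - (2 * m 2 + rank 1 v) div 2 + 2 * s"
proof -
  have "edge_weight e = s - (2 * m 2 + rank 1 v) div 2" if "e \<in> pendant v" for e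
    using that pendant_index_C1[OF that assms] unfolding edge_weight_def pendant_def by simp
  then show ?thesis
    using incident_weight_inner[of v] assms inner_eq unfolding C_def by auto
qed

lemma incident_weight_C2:
  assumes "v \<in> C 2"
  shows "(\<Sum>e\<in>incident v. edge_weight e) = 2 * (s - rank 2 v) + s"
proof -
  have "edge_weight e = s - rank 2 v" if "e \<in> pendant v" for e
    using that pendant_index_C2(1)[OF that assms] unfolding edge_weight_def pendant_def by simp
  then show ?thesis
    using incident_weight_inner[of v] assms inner_eq unfolding C_def by auto
qed

lemma incident_weight_R:
  assumes "v \<in> R"
  obtains "leaf_degree v = 0" "(\<Sum>e\<in>incident v. edge_weight e) = 2 * s"
  | "(\<Sum>v\<in>R. leaf_degree v) = 1" "(\<Sum>e\<in>incident v. edge_weight e) = s - (2 * m 2 + m 1) div 2 + s"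
proof (cases "leaf_degree v = 0")
  case True
  then show thesis
    using that(1) incident_weight_inner[of v s] pendant_empty assms R_subset_inner
    unfolding R_def by auto
next
  case False
  then obtain e where "e \<in> pendant v" unfolding leaf_degree_def by fastforce
  then have "(\<Sum>v\<in>R. leaf_degree v) = 1" using pendant_index_R(2) assms by blast
  moreover have "edge_weight e = s - (2 * m 2 + m 1) div 2" if "e \<in> pendant v" for e
    using that pendant_index_R(1)[OF that assms] unfolding edge_weight_def pendant_def by simp
  moreover have "leaf_degree v = 1" using False leaf_degree_R[OF assms] by simp
  ultimately show thesis
    using that(2) incident_weight_inner[of v] assms R_subset_inner unfolding R_def by auto
qed

lemma V_eq: "V = leaves \<union> (R \<union> (C 1 \<union> (C 2 \<union> C 0)))"
  using inner_eq unfolding inner_def leaves_def by auto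

lemma target_fits:
  assumes "v \<in> V"
  shows "(\<Sum>e\<in>incident v. edge_weight e) < target v \<and> target v \<le> (\<Sum>e\<in>incident v. edge_weight e) + s"
proof -
  consider "v \<in> leaves" | "v \<in> R" | "v \<in> C 1" | "v \<in> C 2" | "v \<in> C 0"
    using assms V_eq by blast
  then show ?thesis
  proof cases
    case 1
    define x where "x = pendant_index (leaf_edge v)"
    have "x + 1 < 2 * s"
      using 1 pendant_index_less s_bounds(1) unfolding x_def pendant_edges_def by fastforce
    then show ?thesis
      using 1 nat_half_bounds[of x] unfolding target_leaf[OF 1] incident_weight_leaf[OF 1] x_def[symmetric]
      by linarith
  next
    case 2
    then show ?thesis
    proof (cases rule: incident_weight_R)
      case 2
      then show ?thesis
        using \<open>v \<in> R\<close> card_leaves_eq s_bounds(1) nat_half_bounds[of "2 * m 2 + m 1"]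
        unfolding target_R[OF \<open>v \<in> R\<close>] by arith
    qed (use \<open>v \<in> R\<close> s_bounds in \<open>simp add: target_R\<close>)
  next
    case 3
    then show ?thesis
      using rank_less[OF 3] s_bounds nat_half_bounds[of "rank 1 v"]
      unfolding target_C1[OF 3] incident_weight_C1[OF 3] by arith
  next
    case 4
    then show ?thesis
      using rank_less[OF 4] s_bounds unfolding target_C2[OF 4] incident_weight_C2[OF 4] by arith
  next
    case 5
    then show ?thesis
      using rank_less[OF 5] s_bounds unfolding target_C0[OF 5] incident_weight_C0[OF 5] by arith
  qed
qed

lemma inj_on_target_C:
  assumes "\<And>v. v \<in> C j \<Longrightarrow> target v = c - (a + rank j v)" "a + m j \<le> c"
  shows "inj_on target (C j)"
proof -
  have "inj_on (\<lambda>v. a + rank j v) (C j)" using inj_on_rank unfolding inj_on_def by simp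
  moreover have "a + rank j v \<le> c" if "v \<in> C j" for v using rank_less[OF that] assms(2) by simp
  ultimately have "inj_on (\<lambda>v. c - (a + rank j v)) (C j)" by (rule inj_on_diff_left_nat)
  then show ?thesis using inj_on_cong[of "C j" target] assms(1) by simp
qed

lemma target_bounds:
  "v \<in> leaves \<Longrightarrow> target v < 2 * s + 1"
  "v \<in> C 1 \<Longrightarrow> 2 * s + 2 \<le> target v \<and> target v < 4 * s + 2 - 2 * m 2"
  "v \<in> C 2 \<Longrightarrow> 4 * s + 2 - 2 * m 2 \<le> target v \<and> target v < 4 * s + 2 - m 2"
  "v \<in> C 0 \<Longrightarrow> 4 * s + 2 - m 2 \<le> target v"
proof -
  show "target v < 2 * s + 1" if "v \<in> leaves" using target_leaf[OF that] by simp
  show "2 * s + 2 \<le> target v \<and> target v < 4 * s + 2 - 2 * m 2" if "v \<in> C 1"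
    using target_C1[OF that] rank_less[OF that] s_bounds by linarith
  show "4 * s + 2 - 2 * m 2 \<le> target v \<and> target v < 4 * s + 2 - m 2" if "v \<in> C 2"
    using target_C2[OF that] rank_less[OF that] s_bounds by linarith
  show "4 * s + 2 - m 2 \<le> target v" if "v \<in> C 0"
    using target_C0[OF that] rank_less[OF that] s_bounds by linarith
qed

lemma inj_on_target: "inj_on target V"
proof -
  have "inj_on (\<lambda>v. pendant_index (leaf_edge v)) leaves"
    using comp_inj_on[OF inj_on_leaf_edge] inj_on_pendant_index
    unfolding pendant_edges_def comp_def by simp
  moreover have "pendant_index (leaf_edge v) \<le> 2 * s" if "v \<in> leaves" for v
    using pendant_index_less[of "leaf_edge v"] s_bounds(1) that unfolding pendant_edges_def by simp
  ultimately have "inj_on (\<lambda>v. 2 * s - pendant_index (leaf_edge v)) leaves"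
    by (rule inj_on_diff_left_nat)
  then have leaves: "inj_on target leaves" using inj_on_cong[of leaves target] target_leaf by simp
  have R: "inj_on target R" using R_subsingleton by (auto intro: inj_onI)
  have "2 * m 2 + m 1 \<le> 4 * s + 1" "m 2 + m 2 \<le> 4 * s + 1" "m 2 + m 0 \<le> 4 * s + 1 + m 0"
    using s_bounds by linarith+
  then have C1: "inj_on target (C 1)" and C2: "inj_on target (C 2)" and C0: "inj_on target (C 0)"
    using inj_on_target_C[OF target_C1] inj_on_target_C[OF target_C2] inj_on_target_C[OF target_C0]
    by blast+
  have low2: "4 * s + 2 - 2 * m 2 \<le> target v" if "v \<in> C 2 \<union> C 0" for v
    using that target_bounds(3,4)[of v] by auto
  have low1: "2 * s + 2 \<le> target v" if "v \<in> C 1 \<union> (C 2 \<union> C 0)" for v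
    using that target_bounds(2)[of v] low2[of v] s_bounds by auto
  have low0: "2 * s + 1 \<le> target v" if "v \<in> R \<union> (C 1 \<union> (C 2 \<union> C 0))" for v
    using that target_R[of v] low1[of v] by auto
  have "inj_on target (C 2 \<union> C 0)"
    by (rule inj_on_Un_separated[OF C2 C0]) (use target_bounds in blast)+
  then have "inj_on target (C 1 \<union> (C 2 \<union> C 0))"
    by (rule inj_on_Un_separated[OF C1]) (use target_bounds(2) low2 in blast)+
  then have "inj_on target (R \<union> (C 1 \<union> (C 2 \<union> C 0)))"
    by (rule inj_on_Un_separated[OF R, where t = "2 * s + 2"]) (use target_R low1 in auto)
  then have "inj_on target (leaves \<union> (R \<union> (C 1 \<union> (C 2 \<union> C 0))))"
    by (rule inj_on_Un_separated[OF leaves]) (use target_bounds(1) low0 in blast)+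
  then show ?thesis using V_eq by simp
qed

theorem irregular_weighting: "irregular_total_weighting V E s vertex_weight edge_weight"
proof -
  have wd: "weighted_degree E vertex_weight edge_weight v = target v" if "v \<in> V" for v
    using target_fits[OF that] unfolding weighted_degree_def vertex_weight_def incident_def by simp
  show ?thesis
    unfolding irregular_total_weighting_def
  proof (intro conjI ballI impI)
    show "vertex_weight v \<in> {1..s}" if "v \<in> V" for v
      using target_fits[OF that] unfolding vertex_weight_def by auto
    show "edge_weight e \<in> {1..s}" for e by (rule edge_weight_range)
    show "weighted_degree E vertex_weight edge_weight u \<noteq> weighted_degree E vertex_weight edge_weight v"
      if "u \<in> V" "v \<in> V" "u \<noteq> v" for u v
      using that wd inj_on_target by (metis inj_onD)
  qed
qed

end

theorem corollary1:
  fixes V :: "'a set" and E :: "'a set set"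
  assumes "binary_tree V E"
  shows "tvs V E = nat \<lceil>(real (card {v \<in> V. degree E v = 1}) + 1) / 2\<rceil>"
proof -
  let ?n = "card {v \<in> V. degree E v = 1}"
  have simple: "simple_graph V E" and "V \<noteq> {}"
    using assms unfolding binary_tree_def is_tree_def connected_graph_def by auto
  have upper: "\<exists>wv we. irregular_total_weighting V E ((?n + 2) div 2) wv we"
  proof (cases "\<exists>c\<in>V. \<forall>u. {c, u} \<in> E \<longrightarrow> degree E u = 1")
    case True
    then show ?thesis using binary_tree_star_weighting[OF assms] by blast
  next
    case False
    then interpret binary_tree_without_star V E using assms by unfold_locales auto
    show ?thesis using irregular_weighting unfolding s_def leaves_def by blast
  qed
  have lower: "(?n + 2) div 2 \<le> s" if "irregular_total_weighting V E s wv we" for s wv we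
    using irregular_total_weighting_card_leaves[OF simple \<open>V \<noteq> {}\<close> that] by presburger
  have "tvs V E = (?n + 2) div 2"
    unfolding tvs_def by (rule Least_equality) (use upper lower in blast)+
  then show ?thesis by (simp add: nat_ceiling_half)
qed

end
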